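(* Let $m\ge1$, let $D$ be a finite set with $|D|=3m$ whose elements are numbered $1,\dots,3m$, and let $\mathcal{C}=\{c_1,\dots,c_\tau\}$ be a collection of $\tau\ge m$ three-element subsets of $D$. For each $i$, let $g_i\in\mathbb{R}^{3m}$ be given by $(g_i)_j=1$ if element $j$ of $D$ lies in $c_i$ and $(g_i)_j=0$ otherwise. For any integer $l\le m$ and $\mathcal{L}=\{i_1,\dots,i_l\}\subseteq\{1,\dots,\tau\}$, let $G_{\mathcal{L}}=[g_{i_1}\ \cdots\ g_{i_l}]$ and $r=\mathrm{rank}(G_{\mathcal{L}})$. Let $d=[1\ \cdots\ 1]^T\in\mathbb{R}^{3m}$. Suppose $\mathcal{C}$ contains no exact cover of $D$ (a subcollection in which every element of $D$ occurs in exactly one member). Then for every such $\mathcal{L}$ with $|\mathcal{L}|\le m$ there exists an orthogonal matrix $N\in\mathbb{R}^{3m\times3m}$ such that $$\begin{bmatrix} d^T\\ G_{\mathcal{L}}^T\end{bmatrix}N=\begin{bmatrix}\gamma & \beta\\ \mathbf{0} & \tilde G_{\mathcal{L}}^T\end{bmatrix},$$ where $\tilde G_{\mathcal{L}}^T\in\mathbb{R}^{l\times r}$ has full column rank, $\gamma\in\mathbb{R}^{1\times(3m-r)}$ has at least one entry (say $\omega\ge1$ entries) equal to $1$, and $\beta\in\mathbb{R}^{1\times r}$. Furthermore, elementary row operations transform $\begin{bmatrix}\gamma & \beta\\ \mathbf{0} & \tilde G_{\mathcal{L}}^T\end{bmatrix}$ into $\begin{bmatrix}\gamma & \mathbf{0}\\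 \mathbf{0} & \tilde G_{\mathcal{L}}^T\end{bmatrix}$. *)

theory Defs
  imports "Jordan_Normal_Form.DL_Rank" "Jordan_Normal_Form.Gauss_Jordan_Elimination"
begin

definition real_orthogonal :: "nat \<Rightarrow> real mat \<Rightarrow> bool" where
  "real_orthogonal n N \<longleftrightarrow> N \<in> carrier_mat n n \<and> transpose_mat N * N = 1\<^sub>m n"

inductive elem_row_op :: "real mat \<Rightarrow> real mat \<Rightarrow> bool" where
  swap: "i < dim_row A \<Longrightarrow> j < dim_row A \<Longrightarrow> elem_row_op A (mat_swaprows i j A)"
| scale: "k < dim_row A \<Longrightarrow> a \<noteq> 0 \<Longrightarrow> elem_row_op A (mat_multrow k a A)"
| add: "k < dim_row A \<Longrightarrow> l < dim_row A \<Longrightarrow> k \<noteq> l \<Longrightarrow> elem_row_op A (mat_addrow a k l A)"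

definition row_ops_transform :: "real mat \<Rightarrow> real mat \<Rightarrow> bool" where
  "row_ops_transform A B \<longleftrightarrow> elem_row_op\<^sup>*\<^sup>* A B"

definition incidence_vec :: "nat \<Rightarrow> nat set \<Rightarrow> real vec" where
  "incidence_vec n c = vec n (\<lambda>j. if j \<in> c then 1 else 0)"

definition has_exact_cover :: "nat \<Rightarrow> nat \<Rightarrow> (nat \<Rightarrow> nat set) \<Rightarrow> bool" where
  "has_exact_cover n tau c \<longleftrightarrow>
     (\<exists>S \<subseteq> {..<tau}. \<forall>x < n. card {i \<in> S. x \<in> c i} = 1)"

end

(* The triples indexed by L cover at most 3|L| <= 3m elements, and they cannot cover all of D:
   by double counting every element would then be covered exactly once, an exact cover.
   So some coordinate j vanishes on every g_i, and the unit vector e_j is orthogonal to the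
   column space of G_L.  Extend an orthonormal basis vs of that column space by e_j and
   complete (Gram--Schmidt) to an orthonormal basis ws @ vs of R^3m with e_j in ws; N has
   these columns.  Then G_L^T ws = 0, the entry of d^T ws at e_j is 1, G_L^T vs has full
   column rank r, and d^T vs = a^T G_L^T vs when G_L a is the orthogonal projection of d
   onto the column space, so row operations clear beta. *)

theory Submission
  imports Defs
begin

abbreviation real_span :: "nat \<Rightarrow> real vec set \<Rightarrow> real vec set" where
  "real_span n S \<equiv> LinearCombinations.module.span class_ring (module_vec TYPE(real) n) S"

lemma scalar_prod_self_nonneg: "0 \<le> (v :: real vec) \<bullet> v"
  using conjugate_square_ge_0_vec[of v] by simp

lemma scalar_prod_self_eq_0_iff:
  fixes v :: "real vec"
  assumes "v \<in> carrier_vec n"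
  shows "v \<bullet> v = 0 \<longleftrightarrow> v = 0\<^sub>v n"
  using conjugate_square_eq_0_vec[OF assms] assms by (auto simp: scalar_prod_def)

lemma mat_of_cols_mult_vec_carrier [simp]: "mat_of_cols n xs *\<^sub>v a \<in> carrier_vec n"
  by (rule carrier_vecI) simp

lemma mat_of_rows_mult_vec_carrier [simp]:
  "mat_of_rows n xs *\<^sub>v v \<in> carrier_vec (length xs)"
  by (rule carrier_vecI) simp

lemma mult_mat_vec_zero [simp]: "A \<in> carrier_mat nr nc \<Longrightarrow> A *\<^sub>v 0\<^sub>v nc = 0\<^sub>v nr"
  by (intro eq_vecI) (auto simp: scalar_prod_def)

lemma row_mat_of_rows [simp]:
  "set xs \<subseteq> carrier_vec n \<Longrightarrow> i < length xs \<Longrightarrow> row (mat_of_rows n xs) i = xs ! i"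
  by (metis mat_of_rows_row nth_mem subsetD)

lemma in_span_iff_mat_of_cols_mult_vec:
  assumes "set xs \<subseteq> carrier_vec n"
  shows "y \<in> real_span n (set xs) \<longleftrightarrow>
           (\<exists>a \<in> carrier_vec (length xs). y = mat_of_cols n xs *\<^sub>v a)"
proof -
  interpret V: vec_space "TYPE(real)" n .
  have span: "V.span (set xs) = V.span_list xs" using V.span_list_as_span[OF assms] by simp
  show ?thesis
  proof
    assume "y \<in> V.span (set xs)"
    then obtain c where c: "y = V.lincomb_list c xs" unfolding span V.span_list_def by auto
    have "y = mat_of_cols n xs *\<^sub>v vec (length xs) c"
      unfolding c using assms by (subst V.lincomb_list_as_mat_mult) auto
    then show "\<exists>a \<in> carrier_vec (length xs). y = mat_of_cols n xs *\<^sub>v a"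
      using vec_carrier by blast
  next
    assume "\<exists>a \<in> carrier_vec (length xs). y = mat_of_cols n xs *\<^sub>v a"
    then obtain a where a: "a \<in> carrier_vec (length xs)" "y = mat_of_cols n xs *\<^sub>v a" by blast
    have "y = V.lincomb_list (\<lambda>i. a $ i) xs"
      using assms a by (subst V.lincomb_list_as_mat_mult) (auto intro!: arg_cong2[where f="(*\<^sub>v)"])
    then show "y \<in> V.span (set xs)" unfolding span V.span_list_def by auto
  qed
qed

lemma scalar_prod_span_eq_0:
  fixes w :: "real vec"
  assumes xs: "set xs \<subseteq> carrier_vec n" and w: "w \<in> carrier_vec n"
    and orth: "\<forall>x \<in> set xs. x \<bullet> w = 0" and y: "y \<in> real_span n (set xs)"
  shows "y \<bullet> w = 0"
proof -
  obtain a where a: "a \<in> carrier_vec (length xs)" "y = mat_of_cols n xs *\<^sub>v a"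
    using y in_span_iff_mat_of_cols_mult_vec[OF xs] by auto
  have "mat_of_rows n xs *\<^sub>v w = 0\<^sub>v (length xs)"
    using orth xs by (intro eq_vecI) auto
  moreover have "w \<bullet> y = (mat_of_rows n xs *\<^sub>v w) \<bullet> a"
    using transpose_vec_mult_scalar[of "mat_of_cols n xs" n "length xs" a w] a w
    by (simp add: transpose_mat_of_cols)
  ultimately show ?thesis
    using a w comm_scalar_prod[of y n w] by simp
qed

lemma rank_eq_if_mult_vec_inj:
  fixes A :: "real mat"
  assumes A: "A \<in> carrier_mat n r"
    and inj: "\<And>v. v \<in> carrier_vec r \<Longrightarrow> A *\<^sub>v v = 0\<^sub>v n \<Longrightarrow> v = 0\<^sub>v r"
  shows "vec_space.rank n A = r"
proof -
  interpret V: vec_space "TYPE(real)" n .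
  have dist: "distinct (cols A)"
  proof (rule ccontr)
    assume "\<not> distinct (cols A)"
    then obtain i j where ij: "i < r" "j < r" "i \<noteq> j" "cols A ! i = cols A ! j"
      using A by (auto simp: distinct_conv_nth)
    define v :: "real vec" where "v = unit_vec r i - unit_vec r j"
    have v: "v \<in> carrier_vec r" unfolding v_def by auto
    have "v $ i \<noteq> 0" using ij unfolding v_def
      by (subst index_minus_vec(1)) (auto simp: unit_vec_def)
    then have nz: "v \<noteq> 0\<^sub>v r" using ij by auto
    have ci: "col A i = col A j" using ij A by auto
    have e1: "A *\<^sub>v unit_vec r i = col A i" using ij(1) A by (auto intro!: eq_vecI)
    have e2: "A *\<^sub>v unit_vec r j = col A j" using ij(2) A by (auto intro!: eq_vecI)
    have "A *\<^sub>v v = A *\<^sub>v unit_vec r i - A *\<^sub>v unit_vec r j"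
      unfolding v_def using A by (auto simp: mult_minus_distrib_mat_vec)
    also have "\<dots> = col A i - col A j" unfolding e1 e2 ..
    also have "col A i - col A j = 0\<^sub>v n" unfolding ci by (rule minus_cancel_vec) (use A ij in auto)
    finally show False using inj[OF v] nz by auto
  qed
  have "\<not> V.lin_dep (set (cols A))"
  proof
    assume "V.lin_dep (set (cols A))"
    from V.lin_depE[OF A this dist] obtain v
      where "v \<in> carrier_vec r" "v \<noteq> 0\<^sub>v r" "A *\<^sub>v v = 0\<^sub>v n" .
    then show False using inj by blast
  qed
  then show ?thesis using V.lin_indpt_full_rank[OF A dist] by auto
qed

lemma rank_mat_of_cols_eq_if_span_eq:
  assumes "set xs \<subseteq> carrier_vec n" "set ys \<subseteq> carrier_vec n"
    and "real_span n (set xs) = real_span n (set ys)"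
  shows "vec_space.rank n (mat_of_cols n xs) = vec_space.rank n (mat_of_cols n ys)"
proof -
  interpret V: vec_space "TYPE(real)" n .
  show ?thesis
    unfolding V.rank_def using cols_mat_of_cols[OF assms(1)] cols_mat_of_cols[OF assms(2)] assms(3)
    by simp
qed

definition orthonormal :: "real vec list \<Rightarrow> bool" where
  "orthonormal qs \<longleftrightarrow>
     (\<forall>i < length qs. \<forall>j < length qs. qs ! i \<bullet> qs ! j = (if i = j then 1 else 0))"

definition gram_mat :: "real vec list \<Rightarrow> real vec list \<Rightarrow> real mat" where
  "gram_mat xs ys = mat (length xs) (length ys) (\<lambda>(i, j). xs ! i \<bullet> ys ! j)"

lemma orthonormalD:
  "orthonormal qs \<Longrightarrow> i < length qs \<Longrightarrow> j < length qs \<Longrightarrow>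
     qs ! i \<bullet> qs ! j = (if i = j then 1 else 0)"
  unfolding orthonormal_def by blast

lemma gram_mat_carrier [simp]:
  "gram_mat xs ys \<in> carrier_mat (length xs) (length ys)"
  "dim_row (gram_mat xs ys) = length xs" "dim_col (gram_mat xs ys) = length ys"
  by (simp_all add: gram_mat_def)

lemma gram_mat_index [simp]:
  "i < length xs \<Longrightarrow> j < length ys \<Longrightarrow> gram_mat xs ys $$ (i, j) = xs ! i \<bullet> ys ! j"
  by (simp add: gram_mat_def)

lemma orthonormal_iff_gram_mat: "orthonormal qs \<longleftrightarrow> gram_mat qs qs = 1\<^sub>m (length qs)"
  by (auto simp: orthonormal_def gram_mat_def mat_eq_iff)

lemma mat_of_rows_mult_mat_of_cols:
  assumes "set xs \<subseteq> carrier_vec n" "set ys \<subseteq> carrier_vec n"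
  shows "mat_of_rows n xs * mat_of_cols n ys = gram_mat xs ys"
proof (rule eq_matI)
  fix i j assume "i < dim_row (gram_mat xs ys)" "j < dim_col (gram_mat xs ys)"
  moreover from this have "xs ! i \<in> carrier_vec n" "ys ! j \<in> carrier_vec n"
    using assms by auto
  ultimately show "(mat_of_rows n xs * mat_of_cols n ys) $$ (i, j) = gram_mat xs ys $$ (i, j)"
    by (simp add: col_mat_of_cols)
qed auto

lemma mat_of_rows_mult_mat_of_cols_mult_vec:
  "v \<in> carrier_vec (length ys) \<Longrightarrow>
     (mat_of_rows n xs * mat_of_cols n ys) *\<^sub>v v = mat_of_rows n xs *\<^sub>v (mat_of_cols n ys *\<^sub>v v)"
  by (rule assoc_mult_mat_vec[OF mat_of_rows_carrier(1) mat_of_cols_carrier(1)])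

lemma gram_mat_append:
  "gram_mat (xs @ xs') (ys @ ys') =
     four_block_mat (gram_mat xs ys) (gram_mat xs ys') (gram_mat xs' ys) (gram_mat xs' ys')"
  by (intro eq_matI) (auto simp: nth_append)

lemma gram_mat_eq_0:
  assumes "\<forall>x \<in> set xs. \<forall>y \<in> set ys. x \<bullet> y = 0"
  shows "gram_mat xs ys = 0\<^sub>m (length xs) (length ys)"
proof (rule eq_matI)
  fix i j assume "i < dim_row (0\<^sub>m (length xs) (length ys))" "j < dim_col (0\<^sub>m (length xs) (length ys))"
  moreover from this have "xs ! i \<in> set xs" "ys ! j \<in> set ys" by simp_all
  ultimately show "gram_mat xs ys $$ (i, j) = 0\<^sub>m (length xs) (length ys) $$ (i, j)"
    using assms by simp
qed simp_all

lemma orthonormal_Cons: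
  assumes "set (q # qs) \<subseteq> carrier_vec n"
  shows "orthonormal (q # qs) \<longleftrightarrow> q \<bullet> q = 1 \<and> (\<forall>p \<in> set qs. p \<bullet> q = 0) \<and> orthonormal qs"
proof
  assume on: "orthonormal (q # qs)"
  have "qs ! k \<bullet> q = 0" if "k < length qs" for k
    using orthonormalD[OF on, of "Suc k" 0] that by simp
  moreover have "orthonormal qs"
    unfolding orthonormal_def using orthonormalD[OF on, of "Suc _" "Suc _"] by simp
  ultimately show "q \<bullet> q = 1 \<and> (\<forall>p \<in> set qs. p \<bullet> q = 0) \<and> orthonormal qs"
    using orthonormalD[OF on, of 0 0] by (auto simp: in_set_conv_nth)
next
  assume "q \<bullet> q = 1 \<and> (\<forall>p \<in> set qs. p \<bullet> q = 0) \<and> orthonormal qs"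
  then have qq: "q \<bullet> q = 1" and orth: "\<And>k. k < length qs \<Longrightarrow> qs ! k \<bullet> q = 0"
    and on: "orthonormal qs" by auto
  have orth': "q \<bullet> qs ! k = 0" if "k < length qs" for k
  proof -
    have "qs ! k \<in> carrier_vec n" using assms that by auto
    then show ?thesis using orth[OF that] assms comm_scalar_prod[of q n "qs ! k"] by simp
  qed
  show "orthonormal (q # qs)"
    unfolding orthonormal_def
  proof (intro allI impI)
    fix i j assume "i < length (q # qs)" "j < length (q # qs)"
    then show "(q # qs) ! i \<bullet> (q # qs) ! j = (if i = j then 1 else 0)"
      using qq orth orth' orthonormalD[OF on] by (cases i; cases j) auto
  qed
qed

lemma orthonormal_unit_vecs: "orthonormal (unit_vecs n)"
  by (simp add: orthonormal_def unit_vecs_def)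

lemma orthonormal_append_orthogonal:
  assumes "orthonormal (xs @ ys)" "x \<in> set xs" "y \<in> set ys"
  shows "y \<bullet> x = 0"
proof -
  obtain i j where ij: "i < length xs" "x = xs ! i" "j < length ys" "y = ys ! j"
    using assms(2,3) by (auto simp: in_set_conv_nth)
  have "(xs @ ys) ! (length xs + j) \<bullet> (xs @ ys) ! i = 0"
    using orthonormalD[OF assms(1), of "length xs + j" i] ij by simp
  then show ?thesis using ij by (simp add: nth_append)
qed

lemma mat_of_cols_orthonormal_mult_vec_eq_0:
  assumes qs: "set qs \<subseteq> carrier_vec n" "orthonormal qs"
    and y: "y \<in> carrier_vec (length qs)" "mat_of_cols n qs *\<^sub>v y = 0\<^sub>v n"
  shows "y = 0\<^sub>v (length qs)"
proof -
  have "mat_of_rows n qs * mat_of_cols n qs = 1\<^sub>m (length qs)"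
    using qs by (simp add: mat_of_rows_mult_mat_of_cols orthonormal_iff_gram_mat)
  then have "y = (mat_of_rows n qs * mat_of_cols n qs) *\<^sub>v y" using y(1) by simp
  also have "\<dots> = mat_of_rows n qs *\<^sub>v (mat_of_cols n qs *\<^sub>v y)"
    using y(1) by (rule mat_of_rows_mult_mat_of_cols_mult_vec)
  also have "\<dots> = mat_of_rows n qs *\<^sub>v 0\<^sub>v n" using y(2) by simp
  also have "\<dots> = 0\<^sub>v (length qs)" by (rule mult_mat_vec_zero) simp
  finally show ?thesis .
qed

lemma rank_mat_of_cols_orthonormal:
  assumes "set qs \<subseteq> carrier_vec n" "orthonormal qs"
  shows "vec_space.rank n (mat_of_cols n qs) = length qs"
proof (rule rank_eq_if_mult_vec_inj)
  fix y assume "y \<in> carrier_vec (length qs)" "mat_of_cols n qs *\<^sub>v y = 0\<^sub>v n"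
  then show "y = 0\<^sub>v (length qs)" by (rule mat_of_cols_orthonormal_mult_vec_eq_0[OF assms])
qed simp

lemma real_orthogonal_mat_of_cols:
  assumes "set qs \<subseteq> carrier_vec n" "orthonormal qs" "length qs = n"
  shows "real_orthogonal n (mat_of_cols n qs)"
  using assms
  by (auto simp: real_orthogonal_def transpose_mat_of_cols mat_of_rows_mult_mat_of_cols
      orthonormal_iff_gram_mat)

definition orth_proj :: "nat \<Rightarrow> real vec list \<Rightarrow> real vec \<Rightarrow> real vec" where
  "orth_proj n qs x = mat_of_cols n qs *\<^sub>v (mat_of_rows n qs *\<^sub>v x)"

lemma orth_proj_carrier [simp]: "orth_proj n qs x \<in> carrier_vec n"
  unfolding orth_proj_def by (rule carrier_vecI) simp

lemma orth_proj_in_span: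
  assumes "set qs \<subseteq> carrier_vec n"
  shows "orth_proj n qs x \<in> real_span n (set qs)"
  unfolding orth_proj_def in_span_iff_mat_of_cols_mult_vec[OF assms]
  using mat_of_rows_mult_vec_carrier by blast

lemma scalar_prod_orth_proj:
  assumes qs: "set qs \<subseteq> carrier_vec n" "orthonormal qs"
    and x: "x \<in> carrier_vec n" and q: "q \<in> set qs"
  shows "q \<bullet> orth_proj n qs x = q \<bullet> x"
proof -
  obtain i where i: "i < length qs" "q = qs ! i"
    using q by (auto simp: in_set_conv_nth)
  have "mat_of_rows n qs *\<^sub>v orth_proj n qs x
          = (mat_of_rows n qs * mat_of_cols n qs) *\<^sub>v (mat_of_rows n qs *\<^sub>v x)"
    unfolding orth_proj_def by (simp add: mat_of_rows_mult_mat_of_cols_mult_vec)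
  also have "\<dots> = mat_of_rows n qs *\<^sub>v x"
    using qs by (simp add: mat_of_rows_mult_mat_of_cols orthonormal_iff_gram_mat[THEN iffD1])
  finally show ?thesis
    using qs i by (metis index_mult_mat_vec mat_of_rows_carrier(2) row_mat_of_rows)
qed

lemma span_insert_eq_if_in_span:
  assumes "S \<subseteq> carrier_vec n" "x \<in> real_span n S"
  shows "real_span n (insert x S) = real_span n S"
proof -
  interpret V: vec_space "TYPE(real)" n .
  have "insert x S \<subseteq> V.span S" using assms V.in_own_span[OF assms(1)] by auto
  then have "V.span (insert x S) \<subseteq> V.span S" using V.span_subsetI[OF assms(1)] by auto
  moreover have "V.span S \<subseteq> V.span (insert x S)" by (intro V.span_is_monotone) auto
  ultimately show ?thesis by auto
qed

lemma span_insert_swap: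
  assumes S: "S \<subseteq> carrier_vec n" and xy: "x \<in> carrier_vec n" "y \<in> carrier_vec n"
    and "x \<in> real_span n (insert y S)" "y \<in> real_span n (insert x S)"
  shows "real_span n (insert x S) = real_span n (insert y S)"
proof -
  interpret V: vec_space "TYPE(real)" n .
  have "insert x S \<subseteq> V.span (insert y S)" "insert y S \<subseteq> V.span (insert x S)"
    using assms V.in_own_span[of "insert y S"] V.in_own_span[of "insert x S"] by auto
  then show ?thesis
    using V.span_subsetI[of "insert y S" "insert x S"] V.span_subsetI[of "insert x S" "insert y S"]
      S xy by auto
qed

lemma smult_add_in_span_insert:
  assumes S: "S \<subseteq> carrier_vec n" and y: "y \<in> carrier_vec n" and w: "w \<in> real_span n S"
  shows "a \<cdot>\<^sub>v y + b \<cdot>\<^sub>v w \<in> real_span n (insert y S)"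
proof -
  interpret V: vec_space "TYPE(real)" n .
  have "y \<in> V.span (insert y S)" using S y V.in_own_span[of "insert y S"] by auto
  moreover have "w \<in> V.span (insert y S)" using w V.span_is_monotone[of S "insert y S"] by auto
  ultimately show ?thesis
    using V.span_add1[OF _ V.smult_in_span V.smult_in_span] S y by auto
qed

lemma orthonormal_Cons_normalize:
  assumes qs: "set qs \<subseteq> carrier_vec n" "orthonormal qs"
    and p: "p \<in> carrier_vec n" "p \<noteq> 0\<^sub>v n" and orth: "\<And>q. q \<in> set qs \<Longrightarrow> q \<bullet> p = 0"
  shows "orthonormal ((1 / sqrt (p \<bullet> p)) \<cdot>\<^sub>v p # qs)"
proof -
  have pp: "p \<bullet> p > 0"
    using scalar_prod_self_nonneg[of p] scalar_prod_self_eq_0_iff[OF p(1)] p(2) by linarith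
  have "((1 / sqrt (p \<bullet> p)) \<cdot>\<^sub>v p) \<bullet> ((1 / sqrt (p \<bullet> p)) \<cdot>\<^sub>v p) = 1"
    using p pp by (simp add: field_simps)
  moreover have "q \<bullet> ((1 / sqrt (p \<bullet> p)) \<cdot>\<^sub>v p) = 0" if "q \<in> set qs" for q
    using that qs p orth by (simp add: scalar_prod_smult_distrib subset_iff)
  ultimately show ?thesis using orthonormal_Cons[of _ qs n] qs p by simp
qed

text \<open>One Gram--Schmidt step: normalise the component of x orthogonal to the span of qs.\<close>

lemma orthonormal_extend_insert:
  assumes qs: "set qs \<subseteq> carrier_vec n" "orthonormal qs" and x: "x \<in> carrier_vec n"
  shows "\<exists>ps. set ps \<subseteq> carrier_vec n \<and> orthonormal (ps @ qs) \<and>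
           real_span n (set (ps @ qs)) = real_span n (insert x (set qs))"
proof -
  define P where "P = orth_proj n qs x"
  define p where "p = x - P"
  have P: "P \<in> carrier_vec n" "P \<in> real_span n (set qs)"
    unfolding P_def using orth_proj_in_span[OF qs(1)] by auto
  have p: "p \<in> carrier_vec n" unfolding p_def using x P by simp
  have p_orth: "q \<bullet> p = 0" if "q \<in> set qs" for q
  proof -
    have "q \<in> carrier_vec n" using that qs by auto
    then show ?thesis
      using scalar_prod_orth_proj[OF qs x that] x P
      unfolding p_def P_def by (simp add: scalar_prod_minus_distrib)
  qed
  show ?thesis
  proof (cases "p = 0\<^sub>v n")
    case True
    then have "x = P" using x P unfolding p_def by (auto simp: vec_eq_iff)
    then have "real_span n (insert x (set qs)) = real_span n (set qs)"
      using span_insert_eq_if_in_span[OF qs(1)] P by simp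
    then show ?thesis using qs by (intro exI[of _ "[]"]) auto
  next
    case False
    define s where "s = sqrt (p \<bullet> p)"
    define q where "q = (1 / s) \<cdot>\<^sub>v p"
    have "p \<bullet> p > 0"
      using scalar_prod_self_nonneg[of p] scalar_prod_self_eq_0_iff[OF p] False by linarith
    then have s: "s > 0" unfolding s_def by auto
    have q: "q \<in> carrier_vec n" unfolding q_def using p by simp
    have "orthonormal (q # qs)"
      unfolding q_def s_def using orthonormal_Cons_normalize[OF qs p False p_orth] .
    moreover have "real_span n (insert q (set qs)) = real_span n (insert x (set qs))"
    proof (rule span_insert_swap[OF qs(1) q x])
      have "q = (1 / s) \<cdot>\<^sub>v x + (- 1 / s) \<cdot>\<^sub>v P"
        unfolding q_def p_def using x P s by (auto simp: vec_eq_iff diff_divide_distrib)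
      then show "q \<in> real_span n (insert x (set qs))"
        using smult_add_in_span_insert[OF qs(1) x P(2)] by simp
      have "x = s \<cdot>\<^sub>v q + 1 \<cdot>\<^sub>v P"
        unfolding q_def p_def using x P s by (auto simp: vec_eq_iff)
      then show "x \<in> real_span n (insert q (set qs))"
        using smult_add_in_span_insert[OF qs(1) q P(2), of s 1] by simp
    qed
    ultimately show ?thesis using q by (intro exI[of _ "[q]"]) auto
  qed
qed

lemma orthonormal_extend:
  assumes "set xs \<subseteq> carrier_vec n" "set qs \<subseteq> carrier_vec n" "orthonormal qs"
  shows "\<exists>ps. set ps \<subseteq> carrier_vec n \<and> orthonormal (ps @ qs) \<and>
           real_span n (set (ps @ qs)) = real_span n (set qs \<union> set xs)"
  using assms
proof (induction xs arbitrary: qs)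
  case Nil
  then show ?case by (intro exI[of _ "[]"]) auto
next
  case (Cons x xs)
  interpret V: vec_space "TYPE(real)" n .
  obtain ps1 where ps1: "set ps1 \<subseteq> carrier_vec n" "orthonormal (ps1 @ qs)"
      "real_span n (set (ps1 @ qs)) = real_span n (insert x (set qs))"
    using orthonormal_extend_insert[OF Cons(3,4), of x] Cons(2) by auto
  obtain ps2 where ps2: "set ps2 \<subseteq> carrier_vec n" "orthonormal (ps2 @ ps1 @ qs)"
      "real_span n (set (ps2 @ ps1 @ qs)) = real_span n (set (ps1 @ qs) \<union> set xs)"
    using Cons(1)[of "ps1 @ qs"] Cons(2,3) ps1 by auto
  have "real_span n (set (ps1 @ qs) \<union> set xs) = real_span n (insert x (set qs) \<union> set xs)"
    using V.span_Un[of "set (ps1 @ qs)" "insert x (set qs)" "set xs" "set xs"] Cons(2,3) ps1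
    by auto
  then show ?case using ps1 ps2 by (intro exI[of _ "ps2 @ ps1"]) auto
qed

lemma orthonormal_basis_of_span:
  assumes "set xs \<subseteq> carrier_vec n"
  obtains vs where "set vs \<subseteq> carrier_vec n" "orthonormal vs"
    "real_span n (set vs) = real_span n (set xs)"
  using orthonormal_extend[OF assms, of "[]"] by (auto simp: orthonormal_def)

lemma orthonormal_completion:
  assumes qs: "set qs \<subseteq> carrier_vec n" "orthonormal qs"
  obtains ps where "set ps \<subseteq> carrier_vec n" "orthonormal (ps @ qs)" "length (ps @ qs) = n"
proof -
  interpret V: vec_space "TYPE(real)" n .
  have units: "set (unit_vecs n :: real vec list) \<subseteq> carrier_vec n" by (rule unit_vecs_carrier)
  obtain ps where ps: "set ps \<subseteq> carrier_vec n" "orthonormal (ps @ qs)"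
      "real_span n (set (ps @ qs)) = real_span n (set qs \<union> set (unit_vecs n))"
    using orthonormal_extend[OF units qs] by auto
  have "real_span n (set (ps @ qs)) = real_span n (set (unit_vecs n))"
  proof
    show "real_span n (set (ps @ qs)) \<subseteq> real_span n (set (unit_vecs n))"
      using V.span_is_subset2[of "set (ps @ qs)"] ps(1) qs(1)
      by (simp add: V.span_unit_vecs_is_carrier)
    show "real_span n (set (unit_vecs n)) \<subseteq> real_span n (set (ps @ qs))"
      unfolding ps(3) by (intro V.span_is_monotone) auto
  qed
  then have "vec_space.rank n (mat_of_cols n (ps @ qs))
               = vec_space.rank n (mat_of_cols n (unit_vecs n :: real vec list))"
    using ps qs units by (intro rank_mat_of_cols_eq_if_span_eq) auto
  then have "length (ps @ qs) = length (unit_vecs n)"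
    using rank_mat_of_cols_orthonormal[of "ps @ qs" n] ps qs
      rank_mat_of_cols_orthonormal[OF units orthonormal_unit_vecs]
    by auto
  then show ?thesis using that ps by (simp add: unit_vecs_def)
qed

lemma rank_gram_mat_orthonormal:
  assumes gs: "set gs \<subseteq> carrier_vec n" and vs: "set vs \<subseteq> carrier_vec n" "orthonormal vs"
    and span: "real_span n (set vs) = real_span n (set gs)"
  shows "vec_space.rank (length gs) (gram_mat gs vs) = length vs"
proof (rule rank_eq_if_mult_vec_inj)
  fix y assume y: "y \<in> carrier_vec (length vs)" "gram_mat gs vs *\<^sub>v y = 0\<^sub>v (length gs)"
  define u where "u = mat_of_cols n vs *\<^sub>v y"
  have u: "u \<in> carrier_vec n" unfolding u_def by simp
  have "mat_of_rows n gs *\<^sub>v u = gram_mat gs vs *\<^sub>v y"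
    unfolding u_def mat_of_rows_mult_mat_of_cols[OF gs vs(1), symmetric]
    using y(1) by (rule mat_of_rows_mult_mat_of_cols_mult_vec[symmetric])
  then have "\<forall>g \<in> set gs. g \<bullet> u = 0"
    using y(2) gs
    by (metis in_set_conv_nth index_mult_mat_vec index_zero_vec(1) mat_of_rows_carrier(2)
        row_mat_of_rows)
  moreover have "u \<in> real_span n (set gs)"
    unfolding span[symmetric] u_def in_span_iff_mat_of_cols_mult_vec[OF vs(1)] using y by auto
  ultimately have "u \<bullet> u = 0" using scalar_prod_span_eq_0[OF gs u] by auto
  then have "mat_of_cols n vs *\<^sub>v y = 0\<^sub>v n"
    using scalar_prod_self_eq_0_iff[OF u] unfolding u_def by simp
  then show "y = 0\<^sub>v (length vs)" by (rule mat_of_cols_orthonormal_mult_vec_eq_0[OF vs y(1)])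
qed simp

text \<open>The coefficients a express the orthogonal projection of d onto the span of gs
  in terms of gs.\<close>

lemma gram_mat_in_row_space:
  assumes gs: "set gs \<subseteq> carrier_vec n" and vs: "set vs \<subseteq> carrier_vec n" "orthonormal vs"
    and span: "real_span n (set vs) = real_span n (set gs)" and d: "d \<in> carrier_vec n"
  obtains a where "a \<in> carrier_vec (length gs)"
    "gram_mat [d] vs = mat_of_rows (length gs) [a] * gram_mat gs vs"
proof -
  obtain a where a: "a \<in> carrier_vec (length gs)" "orth_proj n vs d = mat_of_cols n gs *\<^sub>v a"
    using orth_proj_in_span[OF vs(1), of d] in_span_iff_mat_of_cols_mult_vec[OF gs]
    unfolding span by auto
  have "gram_mat [d] vs = mat_of_rows (length gs) [a] * gram_mat gs vs"
  proof (rule eq_matI)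
    fix i t assume "i < dim_row (mat_of_rows (length gs) [a] * gram_mat gs vs)"
      "t < dim_col (mat_of_rows (length gs) [a] * gram_mat gs vs)"
    then have i: "i = 0" and t: "t < length vs" by auto
    have v: "vs ! t \<in> carrier_vec n" using vs t by auto
    have gv: "mat_of_rows n gs *\<^sub>v vs ! t \<in> carrier_vec (length gs)" by simp
    have "col (gram_mat gs vs) t = mat_of_rows n gs *\<^sub>v vs ! t"
      using t gs by (intro eq_vecI) auto
    then have "(mat_of_rows (length gs) [a] * gram_mat gs vs) $$ (0, t)
                 = a \<bullet> (mat_of_rows n gs *\<^sub>v vs ! t)"
      using a t by simp
    also have "\<dots> = vs ! t \<bullet> orth_proj n vs d"
      using transpose_vec_mult_scalar[of "mat_of_cols n gs" n "length gs" a "vs ! t"] a v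
        comm_scalar_prod[OF a(1) gv]
      by (simp add: transpose_mat_of_cols)
    also have "\<dots> = d \<bullet> vs ! t"
      using scalar_prod_orth_proj[OF vs d] t v d comm_scalar_prod[OF v d] by simp
    finally show "gram_mat [d] vs $$ (i, t) = (mat_of_rows (length gs) [a] * gram_mat gs vs) $$ (i, t)"
      using i t by simp
  qed auto
  then show ?thesis using that a by blast
qed

lemma row_ops_transform_clear_top_right:
  fixes \<gamma> Gt :: "real mat"
  assumes \<gamma>: "\<gamma> \<in> carrier_mat 1 c" and Gt: "Gt \<in> carrier_mat l r" and a: "a \<in> carrier_vec l"
  shows "row_ops_transform (four_block_mat \<gamma> (mat_of_rows l [a] * Gt) (0\<^sub>m l c) Gt)
                           (four_block_mat \<gamma> (0\<^sub>m 1 r) (0\<^sub>m l c) Gt)"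
proof -
  \<comment> \<open>B s is the top right block after subtracting the multiples of the first s rows of Gt\<close>
  define B where "B s = mat 1 r (\<lambda>(_, t). \<Sum>k \<in> {s..<l}. a $ k * Gt $$ (k, t))" for s
  define F where "F X = four_block_mat \<gamma> X (0\<^sub>m l c) Gt" for X
  have B0: "B 0 = mat_of_rows l [a] * Gt"
    unfolding B_def using a Gt by (intro eq_matI) (auto simp: scalar_prod_def)
  have Bl: "B l = 0\<^sub>m 1 r" unfolding B_def by (intro eq_matI) auto
  have step: "F (B (Suc s)) = mat_addrow (- a $ s) 0 (Suc s) (F (B s))" if "s < l" for s
    unfolding F_def B_def mat_addrow_def using \<gamma> Gt that
    by (intro eq_matI) (auto simp: sum.atLeast_Suc_lessThan algebra_simps)
  have "elem_row_op\<^sup>*\<^sup>* (F (B 0)) (F (B s))" if "s \<le> l" for s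
    using that
  proof (induction s)
    case (Suc s)
    have "elem_row_op (F (B s)) (F (B (Suc s)))"
      unfolding step[OF Suc_le_lessD[OF Suc.prems]]
      by (rule elem_row_op.add) (use Suc.prems \<gamma> Gt in \<open>auto simp: F_def B_def\<close>)
    then show ?case using Suc by auto
  qed simp
  from this[OF order.refl] show ?thesis
    unfolding row_ops_transform_def F_def B0 Bl .
qed

lemma orthonormal_basis_through_vector_and_span:
  assumes gs: "set gs \<subseteq> carrier_vec n"
    and u: "u \<in> carrier_vec n" "u \<bullet> u = 1" "\<forall>g \<in> set gs. g \<bullet> u = 0"
  obtains ps vs where "set ps \<subseteq> carrier_vec n" "set vs \<subseteq> carrier_vec n"
    "orthonormal (ps @ u # vs)" "length (ps @ u # vs) = n"
    "orthonormal vs" "real_span n (set vs) = real_span n (set gs)"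
proof -
  interpret V: vec_space "TYPE(real)" n .
  obtain vs where vs: "set vs \<subseteq> carrier_vec n" "orthonormal vs"
      and span: "real_span n (set vs) = real_span n (set gs)"
    using orthonormal_basis_of_span[OF gs] .
  have "\<forall>v \<in> set vs. v \<bullet> u = 0"
    using scalar_prod_span_eq_0[OF gs u(1) u(3)] vs(1) span V.in_own_span[of "set vs"] by blast
  then have "orthonormal (u # vs)" using orthonormal_Cons[of u vs n] u vs by simp
  then obtain ps where "set ps \<subseteq> carrier_vec n" "orthonormal (ps @ u # vs)"
      "length (ps @ u # vs) = n"
    using orthonormal_completion[of "u # vs" n] u vs by auto
  then show ?thesis using that vs span by blast
qed

lemma orthogonal_block_decomposition:
  fixes gs :: "real vec list" and d u :: "real vec"
  assumes gs: "set gs \<subseteq> carrier_vec n" and d: "d \<in> carrier_vec n"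
    and u: "u \<in> carrier_vec n" "u \<bullet> u = 1" "\<forall>g \<in> set gs. g \<bullet> u = 0"
  defines "r \<equiv> vec_space.rank n (mat_of_cols n gs)" and "l \<equiv> length gs"
  shows "\<exists>N \<gamma> \<beta> Gt.
    real_orthogonal n N \<and>
    Gt \<in> carrier_mat l r \<and> vec_space.rank l Gt = r \<and>
    \<gamma> \<in> carrier_mat 1 (n - r) \<and> \<beta> \<in> carrier_mat 1 r \<and>
    (\<exists>j < n - r. \<gamma> $$ (0, j) = d \<bullet> u) \<and>
    mat_of_rows n (d # gs) * N = four_block_mat \<gamma> \<beta> (0\<^sub>m l (n - r)) Gt \<and>
    row_ops_transform (four_block_mat \<gamma> \<beta> (0\<^sub>m l (n - r)) Gt)
                      (four_block_mat \<gamma> (0\<^sub>m 1 r) (0\<^sub>m l (n - r)) Gt)"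
proof -
  interpret V: vec_space "TYPE(real)" n .
  obtain ps vs where ps: "set ps \<subseteq> carrier_vec n" "orthonormal (ps @ u # vs)"
      "length (ps @ u # vs) = n"
    and vs: "set vs \<subseteq> carrier_vec n" "orthonormal vs"
    and span: "real_span n (set vs) = real_span n (set gs)"
    using orthonormal_basis_through_vector_and_span[OF gs u] .
  have r: "r = length vs"
    unfolding r_def using rank_mat_of_cols_eq_if_span_eq[OF gs vs(1) span[symmetric]]
      rank_mat_of_cols_orthonormal[OF vs] by simp
  define ws where "ws = ps @ [u]"
  have ws: "set ws \<subseteq> carrier_vec n" "orthonormal (ws @ vs)" "length ws = n - r"
    unfolding ws_def r using ps u by auto
  define N where "N = mat_of_cols n (ws @ vs)"
  define \<gamma> where "\<gamma> = gram_mat [d] ws"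
  define \<beta> where "\<beta> = gram_mat [d] vs"
  define Gt where "Gt = gram_mat gs vs"
  have "g \<bullet> w = 0" if "g \<in> set gs" "w \<in> set ws" for g w
    using scalar_prod_span_eq_0[OF vs(1), of w g] orthonormal_append_orthogonal[OF ws(2) that(2)]
      ws(1) that span gs V.in_own_span[of "set gs"] by blast
  then have "gram_mat gs ws = 0\<^sub>m l (n - r)"
    using gram_mat_eq_0[of gs ws] ws(3) unfolding l_def by auto
  then have "mat_of_rows n (d # gs) * N = four_block_mat \<gamma> \<beta> (0\<^sub>m l (n - r)) Gt"
    using mat_of_rows_mult_mat_of_cols[of "[d] @ gs" n "ws @ vs"] gram_mat_append[of "[d]" gs ws vs]
      gs d ws vs unfolding N_def \<gamma>_def \<beta>_def Gt_def by simp
  moreover obtain a where "a \<in> carrier_vec l" "\<beta> = mat_of_rows l [a] * Gt"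
    using gram_mat_in_row_space[OF gs vs span d] unfolding l_def \<beta>_def Gt_def .
  moreover have "\<gamma> \<in> carrier_mat 1 (n - r)" "\<beta> \<in> carrier_mat 1 r" "Gt \<in> carrier_mat l r"
    unfolding \<gamma>_def \<beta>_def Gt_def l_def using ws(3) r by (auto intro!: carrier_matI)
  moreover have "\<gamma> $$ (0, length ps) = d \<bullet> u" "length ps < n - r"
    using ws(3) unfolding \<gamma>_def ws_def by auto
  moreover have "real_orthogonal n N"
    using real_orthogonal_mat_of_cols[of "ws @ vs" n] ws vs ps(3) unfolding N_def ws_def by simp
  moreover have "vec_space.rank l Gt = r"
    using rank_gram_mat_orthonormal[OF gs vs span] unfolding Gt_def r l_def .
  ultimately show ?thesis
    using row_ops_transform_clear_top_right[of \<gamma> "n - r" Gt l r] by metis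
qed

lemma exists_uncovered_element:
  assumes c: "\<forall>i \<in> L. c i \<subseteq> {..<n} \<and> card (c i) = k"
    and L: "L \<subseteq> {..<tau}" "k * card L \<le> n"
    and no_cover: "\<not> has_exact_cover n tau c"
  shows "\<exists>j < n. \<forall>i \<in> L. j \<notin> c i"
proof (rule ccontr)
  assume "\<not> ?thesis"
  then have covered: "card {i \<in> L. x \<in> c i} \<ge> 1" if "x < n" for x
    using that L finite_subset by (fastforce simp: Suc_le_eq card_gt_0_iff)
  have "finite L" using L finite_subset by blast
  then have sum: "(\<Sum>x<n. card {i \<in> L. x \<in> c i}) = k * card L"
    using c by (intro sum_multicount) (auto intro!: arg_cong[where f=card])
  have "\<forall>x<n. card {i \<in> L. x \<in> c i} = 1"
  proof (rule ccontr)
    assume "\<not> (\<forall>x<n. card {i \<in> L. x \<in> c i} = 1)"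
    then obtain x0 where "x0 < n" "card {i \<in> L. x0 \<in> c i} > 1"
      using covered by (metis le_neq_implies_less)
    then have "(\<Sum>x<n. 1) < (\<Sum>x<n. card {i \<in> L. x \<in> c i})"
      using covered by (intro sum_strict_mono_ex1) auto
    then show False using sum L(2) by simp
  qed
  then show False using no_cover L(1) unfolding has_exact_cover_def by blast
qed

theorem lemma5:
  fixes m tau :: nat and c :: "nat \<Rightarrow> nat set" and L :: "nat set"
  assumes "m \<ge> 1"
    and "tau \<ge> m"
    and "\<forall>i < tau. c i \<subseteq> {..<3*m} \<and> card (c i) = 3"
    and "\<not> has_exact_cover (3*m) tau c"
    and "L \<subseteq> {..<tau}" and "card L \<le> m"
  shows
   "let l = card L;
        gs = map (\<lambda>i. incidence_vec (3*m) (c i)) (sorted_list_of_set L);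
        G = mat_of_cols (3*m) gs;
        r = vec_space.rank (3*m) G;
        d = vec (3*m) (\<lambda>_. 1 :: real);
        M = mat_of_rows (3*m) (d # gs)
    in \<exists>N \<gamma> \<beta> Gt.
         real_orthogonal (3*m) N \<and>
         Gt \<in> carrier_mat l r \<and> vec_space.rank l Gt = r \<and>
         \<gamma> \<in> carrier_mat 1 (3*m - r) \<and> \<beta> \<in> carrier_mat 1 r \<and>
         (\<exists>j < 3*m - r. \<gamma> $$ (0, j) = 1) \<and>
         M * N = four_block_mat \<gamma> \<beta> (0\<^sub>m l (3*m - r)) Gt \<and>
         row_ops_transform (four_block_mat \<gamma> \<beta> (0\<^sub>m l (3*m - r)) Gt)
                           (four_block_mat \<gamma> (0\<^sub>m 1 r) (0\<^sub>m l (3*m - r)) Gt)"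
proof -
  obtain j where j: "j < 3 * m" "\<forall>i \<in> L. j \<notin> c i"
    using exists_uncovered_element[of L c "3 * m" 3 tau] assms(3-6) by auto
  define gs where "gs = map (\<lambda>i. incidence_vec (3 * m) (c i)) (sorted_list_of_set L)"
  have "finite L" using assms(5) finite_subset by blast
  then have len: "length gs = card L" and orth: "\<forall>g \<in> set gs. g \<bullet> unit_vec (3 * m) j = 0"
    using j unfolding gs_def incidence_vec_def by auto
  have gs: "set gs \<subseteq> carrier_vec (3 * m)"
    unfolding gs_def incidence_vec_def by auto
  have unit: "unit_vec (3 * m) j \<bullet> unit_vec (3 * m) j = (1 :: real)" using j by simp
  have d: "vec (3 * m) (\<lambda>_. 1 :: real) \<in> carrier_vec (3 * m)" by simp
  have one: "vec (3 * m) (\<lambda>_. 1 :: real) \<bullet> unit_vec (3 * m) j = 1" using j by simp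
  show ?thesis
    using orthogonal_block_decomposition[OF gs d unit_vec_carrier unit orth, unfolded one len]
    unfolding Let_def gs_def[symmetric] .
qed

end
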